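(* Let $F(X)\in\mathbb{Z}[X]$ be monic irreducible of degree $d$ with fixed root $\xi$, $L=\mathbb{Q}(\xi)$ Galois over $\mathbb{Q}$ with group $G$, and $\{\sigma\xi\}_{\sigma\in G}$ a normal basis of $L$. Let $K_1,\dots,K_r$ be the conjugacy classes of $G$, $\Gamma=[X_{\sigma\tau^{-1}}]_{\sigma,\tau\in G}$, $\partial_\tau=\frac{1}{|G|}\frac{\partial\det\Gamma}{\partial X_\tau}$, and let $\partial_\tau(\xi)$, $\det\Gamma_\xi$ be the values under $X_\sigma\mapsto\sigma\xi$. For $i\ge0$ and $1\le j\le r$ set $$a_{K_j,i}=\frac{1}{\det\Gamma_\xi}\sum_{\sigma\in G}\sum_{\tau\in K_j}\sigma(\xi^i)\,\partial_{\sigma\tau}(\xi).$$ Then $a_{K_j,i}\in\mathbb{Q}$ for all $i\ge0$ and all $j$. *)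

theory Defs
  imports "HOL-Analysis.Analysis" "HOL-Computational_Algebra.Polynomial_Factorial" "HOL-Combinatorics.Permutations"
begin

definition is_subfield :: "complex set \<Rightarrow> bool" where
  "is_subfield S \<longleftrightarrow> 0 \<in> S \<and> 1 \<in> S \<and>
     (\<forall>x\<in>S. \<forall>y\<in>S. x + y \<in> S \<and> x - y \<in> S \<and> x * y \<in> S) \<and>
     (\<forall>x\<in>S. x \<noteq> 0 \<longrightarrow> inverse x \<in> S)"

definition gen_field :: "complex \<Rightarrow> complex set" where
  "gen_field \<xi> = \<Inter>{S. is_subfield S \<and> \<xi> \<in> S}"

text \<open>Normality over Q (separability is automatic in characteristic 0): every irreducible
  rational polynomial with a root in L has all its (complex) roots in L.\<close>
definition galois_over_Q :: "complex set \<Rightarrow> bool" where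
  "galois_over_Q L \<longleftrightarrow> (\<forall>p :: rat poly. irreducible p \<longrightarrow>
      (\<exists>x\<in>L. poly (map_poly of_rat p) x = 0) \<longrightarrow>
      (\<forall>z. poly (map_poly of_rat p) z = 0 \<longrightarrow> z \<in> L))"

text \<open>Field automorphisms of L (they automatically fix Q, so this is Gal(L/Q));
  normalised to be the identity outside L.\<close>
definition Aut :: "complex set \<Rightarrow> (complex \<Rightarrow> complex) set" where
  "Aut L = {\<sigma>. bij_betw \<sigma> L L \<and>
     (\<forall>x\<in>L. \<forall>y\<in>L. \<sigma> (x + y) = \<sigma> x + \<sigma> y \<and> \<sigma> (x * y) = \<sigma> x * \<sigma> y) \<and>
     \<sigma> 1 = 1 \<and> (\<forall>x. x \<notin> L \<longrightarrow> \<sigma> x = x)}"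

definition normal_basis :: "complex set \<Rightarrow> (complex \<Rightarrow> complex) set \<Rightarrow> complex \<Rightarrow> bool" where
  "normal_basis L G \<xi> \<longleftrightarrow> inj_on (\<lambda>\<sigma>. \<sigma> \<xi>) G \<and>
     (\<forall>c :: (complex \<Rightarrow> complex) \<Rightarrow> rat. (\<Sum>\<sigma>\<in>G. of_rat (c \<sigma>) * \<sigma> \<xi>) = 0 \<longrightarrow> (\<forall>\<sigma>\<in>G. c \<sigma> = 0)) \<and>
     (\<forall>x\<in>L. \<exists>c :: (complex \<Rightarrow> complex) \<Rightarrow> rat. x = (\<Sum>\<sigma>\<in>G. of_rat (c \<sigma>) * \<sigma> \<xi>))"

text \<open>det of the group matrix [X_{sigma tau^{-1}}] (Leibniz formula), at the point X = x.\<close>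
definition gdet :: "(complex \<Rightarrow> complex) set \<Rightarrow> ((complex \<Rightarrow> complex) \<Rightarrow> complex) \<Rightarrow> complex" where
  "gdet G x = (\<Sum>\<pi> | \<pi> permutes G. of_int (sign \<pi>) * (\<Prod>\<sigma>\<in>G. x (\<sigma> \<circ> inv (\<pi> \<sigma>))))"

definition gpartial :: "(complex \<Rightarrow> complex) set \<Rightarrow> ((complex \<Rightarrow> complex) \<Rightarrow> complex) \<Rightarrow> (complex \<Rightarrow> complex) \<Rightarrow> complex" where
  "gpartial G x \<tau> = (1 / of_nat (card G)) * deriv (\<lambda>t. gdet G (x(\<tau> := x \<tau> + t))) 0"

definition conj_class :: "(complex \<Rightarrow> complex) set \<Rightarrow> (complex \<Rightarrow> complex) \<Rightarrow> (complex \<Rightarrow> complex) set" where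
  "conj_class G \<tau> = {\<rho> \<circ> \<tau> \<circ> inv \<rho> | \<rho>. \<rho> \<in> G}"

definition a_coeff :: "(complex \<Rightarrow> complex) set \<Rightarrow> complex \<Rightarrow> (complex \<Rightarrow> complex) set \<Rightarrow> nat \<Rightarrow> complex" where
  "a_coeff G \<xi> K i = (1 / gdet G (\<lambda>\<sigma>. \<sigma> \<xi>)) *
     (\<Sum>\<sigma>\<in>G. \<Sum>\<tau>\<in>K. \<sigma> (\<xi> ^ i) * gpartial G (\<lambda>\<sigma>. \<sigma> \<xi>) (\<sigma> \<circ> \<tau>))"

end

theory Submission
  imports Defs
begin

text \<open>An automorphism \<open>\<rho>\<close> of \<open>L\<close> sends the entries \<open>\<sigma>\<xi>\<close> of \<open>\<Gamma>\<^sub>\<xi>\<close> to \<open>(\<rho>\<sigma>)\<xi>\<close>, i.e.\ it permutes the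
  rows of the group matrix by left translation. Hence \<open>\<rho>(det \<Gamma>\<^sub>\<xi>) = \<epsilon> det \<Gamma>\<^sub>\<xi>\<close> and
  \<open>\<rho>(\<partial>\<^sub>\<tau>(\<xi>)) = \<epsilon> \<partial>\<^sub>\<rho>\<^sub>\<tau>(\<xi>)\<close> with the same sign \<open>\<epsilon> = \<plusminus>1\<close>, and after reindexing \<open>\<sigma> \<mapsto> \<rho>\<sigma>\<close>
  the quotient \<open>a\<^sub>K\<^sub>,\<^sub>i\<close> is fixed by every \<open>\<rho> \<in> G\<close>. A normal basis makes the fixed field
  of \<open>G\<close> equal to \<open>\<rat>\<close>: an invariant element has constant coordinates, so it is a rational
  multiple of the trace of \<open>\<xi>\<close>, and so is \<open>1\<close>.\<close>

lemma subfield_0: "is_subfield L \<Longrightarrow> 0 \<in> L"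
  and subfield_1: "is_subfield L \<Longrightarrow> 1 \<in> L"
  and subfield_add: "is_subfield L \<Longrightarrow> x \<in> L \<Longrightarrow> y \<in> L \<Longrightarrow> x + y \<in> L"
  and subfield_diff: "is_subfield L \<Longrightarrow> x \<in> L \<Longrightarrow> y \<in> L \<Longrightarrow> x - y \<in> L"
  and subfield_mult: "is_subfield L \<Longrightarrow> x \<in> L \<Longrightarrow> y \<in> L \<Longrightarrow> x * y \<in> L"
  by (auto simp: is_subfield_def)

lemma subfield_inverse: "is_subfield L \<Longrightarrow> x \<in> L \<Longrightarrow> inverse x \<in> L"
  by (cases "x = 0") (auto simp: is_subfield_def)

lemma subfield_divide: "is_subfield L \<Longrightarrow> x \<in> L \<Longrightarrow> y \<in> L \<Longrightarrow> x / y \<in> L"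
  by (simp add: divide_inverse subfield_mult subfield_inverse)

lemma subfield_power: "is_subfield L \<Longrightarrow> x \<in> L \<Longrightarrow> x ^ n \<in> L"
  by (induction n) (auto intro: subfield_mult subfield_1)

lemma subfield_sum: "is_subfield L \<Longrightarrow> (\<And>i. i \<in> A \<Longrightarrow> f i \<in> L) \<Longrightarrow> sum f A \<in> L"
  by (induction A rule: infinite_finite_induct) (auto intro: subfield_add subfield_0)

lemma subfield_prod: "is_subfield L \<Longrightarrow> (\<And>i. i \<in> A \<Longrightarrow> f i \<in> L) \<Longrightarrow> prod f A \<in> L"
  by (induction A rule: infinite_finite_induct) (auto intro: subfield_mult subfield_1)

lemma subfield_of_int: "is_subfield L \<Longrightarrow> of_int k \<in> L"
proof (induction k rule: int_induct[where k = 0])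
  case base then show ?case by (simp add: subfield_0)
next
  case (step1 i) then show ?case by (simp add: subfield_add subfield_1)
next
  case (step2 i) then show ?case by (simp add: subfield_diff subfield_1)
qed

lemma subfield_Rats: "is_subfield L \<Longrightarrow> x \<in> \<rat> \<Longrightarrow> x \<in> L"
  by (auto elim!: Rats_cases' intro!: subfield_divide subfield_of_int)

lemma is_subfield_gen_field: "is_subfield (gen_field \<xi>)"
  unfolding gen_field_def is_subfield_def by auto

lemma gen_field_generator: "\<xi> \<in> gen_field \<xi>"
  unfolding gen_field_def by auto

locale subfield_hom =
  fixes L :: "complex set" and \<rho> :: "complex \<Rightarrow> complex"
  assumes subfield: "is_subfield L"
    and hom_add: "x \<in> L \<Longrightarrow> y \<in> L \<Longrightarrow> \<rho> (x + y) = \<rho> x + \<rho> y"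
    and hom_mult: "x \<in> L \<Longrightarrow> y \<in> L \<Longrightarrow> \<rho> (x * y) = \<rho> x * \<rho> y"
    and hom_1: "\<rho> 1 = 1"
begin

lemma hom_0: "\<rho> 0 = 0"
  using hom_add[of 0 0] subfield_0[OF subfield] by simp

lemma hom_diff: "x \<in> L \<Longrightarrow> y \<in> L \<Longrightarrow> \<rho> (x - y) = \<rho> x - \<rho> y"
  using hom_add[of "x - y" y] subfield_diff[OF subfield] by (simp add: algebra_simps)

lemma hom_of_int: "\<rho> (of_int k) = of_int k"
proof (induction k rule: int_induct[where k = 0])
  case base then show ?case by (simp add: hom_0)
next
  case (step1 i) then show ?case
    using hom_add[of "of_int i" 1] by (simp add: subfield_of_int[OF subfield] subfield_1[OF subfield] hom_1)
next
  case (step2 i) then show ?case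
    using hom_diff[of "of_int i" 1] by (simp add: subfield_of_int[OF subfield] subfield_1[OF subfield] hom_1)
qed

lemma hom_inverse: "x \<in> L \<Longrightarrow> \<rho> (inverse x) = inverse (\<rho> x)"
proof (cases "x = 0")
  case False
  assume "x \<in> L"
  then have "\<rho> x * \<rho> (inverse x) = 1"
    using hom_mult[of x "inverse x"] subfield_inverse[OF subfield] False hom_1 by simp
  then show ?thesis by (rule inverse_unique[symmetric])
qed (simp add: hom_0)

lemma hom_divide: "x \<in> L \<Longrightarrow> y \<in> L \<Longrightarrow> \<rho> (x / y) = \<rho> x / \<rho> y"
  by (simp add: divide_inverse hom_mult hom_inverse subfield_inverse[OF subfield])

lemma hom_Rats: "x \<in> \<rat> \<Longrightarrow> \<rho> x = x"
  by (auto elim!: Rats_cases' simp: hom_divide hom_of_int subfield_of_int[OF subfield])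

lemma hom_sum: "(\<And>i. i \<in> A \<Longrightarrow> f i \<in> L) \<Longrightarrow> \<rho> (sum f A) = (\<Sum>i\<in>A. \<rho> (f i))"
  by (induction A rule: infinite_finite_induct) (auto simp: hom_0 hom_add subfield_sum[OF subfield])

lemma hom_prod: "(\<And>i. i \<in> A \<Longrightarrow> f i \<in> L) \<Longrightarrow> \<rho> (prod f A) = (\<Prod>i\<in>A. \<rho> (f i))"
  by (induction A rule: infinite_finite_induct) (auto simp: hom_1 hom_mult subfield_prod[OF subfield])

end

lemma Aut_subfield_hom: "is_subfield L \<Longrightarrow> \<rho> \<in> Aut L \<Longrightarrow> subfield_hom L \<rho>"
  unfolding Aut_def subfield_hom_def by auto

lemma Aut_image: "\<rho> \<in> Aut L \<Longrightarrow> x \<in> L \<Longrightarrow> \<rho> x \<in> L"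
  unfolding Aut_def by (auto dest: bij_betwE)

lemma Aut_bij:
  assumes "\<rho> \<in> Aut L" shows "bij \<rho>"
proof -
  have "bij_betw \<rho> L L" and "bij_betw \<rho> (- L) (- L)"
    using assms unfolding Aut_def by (auto intro: bij_betw_cong[THEN iffD2, OF _ bij_betw_id])
  then have "bij_betw \<rho> (L \<union> - L) (L \<union> - L)" by (rule bij_betw_combine) simp
  then show ?thesis by simp
qed

lemma Aut_id: "id \<in> Aut L"
  unfolding Aut_def by auto

lemma Aut_comp: "\<rho> \<in> Aut L \<Longrightarrow> \<sigma> \<in> Aut L \<Longrightarrow> \<rho> \<circ> \<sigma> \<in> Aut L"
  unfolding Aut_def by (auto intro: bij_betw_trans dest: bij_betwE)

lemma Aut_inv:
  assumes "\<rho> \<in> Aut L" shows "inv \<rho> \<in> Aut L"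
proof -
  have bij: "bij \<rho>" and L: "bij_betw \<rho> L L" using assms Aut_bij unfolding Aut_def by auto
  have inv_cancel: "inv \<rho> (\<rho> x) = x" "\<rho> (inv \<rho> x) = x" for x
    using bij by (simp_all add: bij_is_inj bij_is_surj surj_f_inv_f)
  have L': "bij_betw (inv \<rho>) L L"
    using bij_betw_inv_into_subset[OF bij subset_UNIV bij_betw_imp_surj_on[OF L]] .
  have hom: "inv \<rho> (x + y) = inv \<rho> x + inv \<rho> y \<and> inv \<rho> (x * y) = inv \<rho> x * inv \<rho> y"
    if "x \<in> L" "y \<in> L" for x y
  proof -
    have "inv \<rho> x \<in> L" "inv \<rho> y \<in> L" using L' that by (auto dest: bij_betwE)
    then have "\<rho> (inv \<rho> x + inv \<rho> y) = x + y" "\<rho> (inv \<rho> x * inv \<rho> y) = x * y"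
      using assms unfolding Aut_def by (simp_all add: inv_cancel)
    then show ?thesis by (metis inv_cancel(1))
  qed
  show ?thesis
    using assms L' hom unfolding Aut_def by (auto intro: inv_f_eq[OF bij_is_inj[OF bij]])
qed

lemma bij_betw_comp_left:
  assumes "bij \<rho>" and "\<And>\<sigma>. \<sigma> \<in> G \<Longrightarrow> \<rho> \<circ> \<sigma> \<in> G" and "\<And>\<sigma>. \<sigma> \<in> G \<Longrightarrow> inv \<rho> \<circ> \<sigma> \<in> G"
  shows "bij_betw ((\<circ>) \<rho>) G G"
proof (rule bij_betwI[where g = "(\<circ>) (inv \<rho>)"])
  have "inv \<rho> \<circ> \<rho> = id" "\<rho> \<circ> inv \<rho> = id"
    using assms(1) by (simp_all add: bij_is_inj bij_is_surj flip: inj_iff surj_iff)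
  then show "inv \<rho> \<circ> (\<rho> \<circ> \<sigma>) = \<sigma>" "\<rho> \<circ> (inv \<rho> \<circ> \<sigma>) = \<sigma>" for \<sigma>
    by (simp_all flip: comp_assoc)
qed (use assms in auto)

lemma Aut_comp_left_bij: "\<rho> \<in> Aut L \<Longrightarrow> bij_betw ((\<circ>) \<rho>) (Aut L) (Aut L)"
  by (rule bij_betw_comp_left) (auto intro: Aut_bij Aut_comp Aut_inv)

lemma normal_basis_independent:
  "normal_basis L G \<xi> \<Longrightarrow> (\<Sum>\<sigma>\<in>G. of_rat (c \<sigma>) * \<sigma> \<xi>) = 0 \<Longrightarrow> \<sigma> \<in> G \<Longrightarrow> c \<sigma> = 0"
  unfolding normal_basis_def by blast

lemma normal_basis_finite:
  assumes "normal_basis L (Aut L) \<xi>" shows "finite (Aut L)"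
proof (rule ccontr)
  assume "infinite (Aut L)"
  then have "(\<Sum>\<sigma>\<in>Aut L. of_rat 1 * \<sigma> \<xi>) = 0" by simp
  from normal_basis_independent[OF assms this Aut_id] show False by simp
qed

lemma normal_basis_coeffs_invariant:
  assumes L: "is_subfield L" "\<xi> \<in> L" and nb: "normal_basis L (Aut L) \<xi>"
    and x: "x = (\<Sum>\<sigma>\<in>Aut L. of_rat (c \<sigma>) * \<sigma> \<xi>)" and fixed: "\<forall>\<rho>\<in>Aut L. \<rho> x = x"
    and \<rho>: "\<rho> \<in> Aut L" and \<sigma>: "\<sigma> \<in> Aut L"
  shows "c (inv \<rho> \<circ> \<sigma>) = c \<sigma>"
proof -
  interpret subfield_hom L \<rho> using Aut_subfield_hom L(1) \<rho> .
  have "inv \<rho> \<circ> \<rho> = id" using Aut_bij[OF \<rho>] by (simp add: bij_is_inj flip: inj_iff)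
  then have "\<rho> x = (\<Sum>\<sigma>\<in>Aut L. of_rat (c (inv \<rho> \<circ> (\<rho> \<circ> \<sigma>))) * (\<rho> \<circ> \<sigma>) \<xi>)"
    unfolding x using L
    by (subst hom_sum) (auto simp: hom_mult hom_Rats subfield_Rats subfield_mult Aut_image
        simp flip: comp_assoc)
  also have "\<dots> = (\<Sum>\<sigma>\<in>Aut L. of_rat (c (inv \<rho> \<circ> \<sigma>)) * \<sigma> \<xi>)"
    by (rule sum.reindex_bij_betw[OF Aut_comp_left_bij[OF \<rho>]])
  finally have "(\<Sum>\<sigma>\<in>Aut L. of_rat (c (inv \<rho> \<circ> \<sigma>)) * \<sigma> \<xi>) = x"
    using fixed \<rho> by metis
  then have "(\<Sum>\<sigma>\<in>Aut L. of_rat (c (inv \<rho> \<circ> \<sigma>) - c \<sigma>) * \<sigma> \<xi>) = 0"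
    unfolding x by (simp add: of_rat_diff left_diff_distrib sum_subtractf)
  from normal_basis_independent[OF nb this \<sigma>] show ?thesis by simp
qed

lemma normal_basis_fixed_imp_Rats:
  assumes L: "is_subfield L" "\<xi> \<in> L" and nb: "normal_basis L (Aut L) \<xi>"
    and "x \<in> L" and "\<forall>\<rho>\<in>Aut L. \<rho> x = x"
  shows "x \<in> \<rat>"
proof -
  define T where "T = (\<Sum>\<sigma>\<in>Aut L. \<sigma> \<xi>)"
  have multiple_of_T: "\<exists>q. z = of_rat q * T" if "z \<in> L" and fixed: "\<forall>\<rho>\<in>Aut L. \<rho> z = z" for z
  proof -
    obtain c where c: "z = (\<Sum>\<sigma>\<in>Aut L. of_rat (c \<sigma>) * \<sigma> \<xi>)"
      using nb \<open>z \<in> L\<close> unfolding normal_basis_def by blast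
    have "c \<sigma> = c id" if "\<sigma> \<in> Aut L" for \<sigma>
    proof -
      have "inv \<sigma> \<circ> \<sigma> = id" using Aut_bij[OF that] by (simp add: bij_is_inj flip: inj_iff)
      then show ?thesis using normal_basis_coeffs_invariant[OF L nb c fixed that that] by simp
    qed
    then have "z = of_rat (c id) * T"
      unfolding c T_def sum_distrib_left by (intro sum.cong) auto
    then show ?thesis ..
  qed
  obtain q where q: "x = of_rat q * T" using multiple_of_T assms(4,5) by blast
  obtain q1 where q1: "1 = of_rat q1 * T"
    using multiple_of_T[of 1] subfield_1[OF L(1)] unfolding Aut_def by auto
  then have "(of_rat q1 :: complex) \<noteq> 0" by auto
  with q q1 have "x = of_rat (q / q1)"
    by (simp add: of_rat_divide field_simps)
  then show ?thesis by simp
qed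

definition gdet_deriv ::
  "(complex \<Rightarrow> complex) set \<Rightarrow> ((complex \<Rightarrow> complex) \<Rightarrow> complex) \<Rightarrow> (complex \<Rightarrow> complex) \<Rightarrow> complex" where
  "gdet_deriv G y \<tau> = (\<Sum>\<pi> | \<pi> permutes G. of_int (sign \<pi>) *
      (\<Sum>s\<in>G. (if s \<circ> inv (\<pi> s) = \<tau> then 1 else 0) * (\<Prod>\<sigma>\<in>G - {s}. y (\<sigma> \<circ> inv (\<pi> \<sigma>)))))"

lemma has_field_derivative_gdet:
  "((\<lambda>t. gdet G (y(\<tau> := y \<tau> + t))) has_field_derivative gdet_deriv G y \<tau>) (at 0)"
proof -
  have "((\<lambda>t. (y(\<tau> := y \<tau> + t)) \<sigma>) has_field_derivative (if \<sigma> = \<tau> then 1 else 0)) (at 0)" for \<sigma>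
    by (cases "\<sigma> = \<tau>") (auto intro!: derivative_eq_intros)
  then have "((\<lambda>t. gdet G (y(\<tau> := y \<tau> + t))) has_field_derivative (\<Sum>\<pi> | \<pi> permutes G. of_int (sign \<pi>) *
      (\<Sum>s\<in>G. (if s \<circ> inv (\<pi> s) = \<tau> then 1 else 0) * (\<Prod>\<sigma>\<in>G - {s}. (y(\<tau> := y \<tau> + 0)) (\<sigma> \<circ> inv (\<pi> \<sigma>)))))) (at 0)"
    unfolding gdet_def by (intro DERIV_sum DERIV_cmult has_field_derivative_prod)
  then show ?thesis unfolding gdet_deriv_def by simp
qed

lemma gpartial_eq_gdet_deriv: "gpartial G y \<tau> = gdet_deriv G y \<tau> / of_nat (card G)"
  unfolding gpartial_def using DERIV_imp_deriv[OF has_field_derivative_gdet] by simp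

definition translation_sign :: "(complex \<Rightarrow> complex) set \<Rightarrow> (complex \<Rightarrow> complex) \<Rightarrow> complex" where
  "translation_sign G \<rho> = of_int (sign (\<lambda>\<sigma>. if \<sigma> \<in> G then \<rho> \<circ> \<sigma> else \<sigma>))"

lemma translation_sign_square: "translation_sign G \<rho> * translation_sign G \<rho> = 1"
  unfolding translation_sign_def by (simp flip: of_int_mult)

context
  fixes G :: "(complex \<Rightarrow> complex) set" and \<rho> :: "complex \<Rightarrow> complex"
  assumes finite: "finite G" and bij: "bij \<rho>"
    and closed: "\<And>\<sigma>. \<sigma> \<in> G \<Longrightarrow> \<rho> \<circ> \<sigma> \<in> G" and closed_inv: "\<And>\<sigma>. \<sigma> \<in> G \<Longrightarrow> inv \<rho> \<circ> \<sigma> \<in> G"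
begin

lemma gdet_left_translate:
  "gdet G (\<lambda>\<sigma>. y (\<rho> \<circ> \<sigma>)) = translation_sign G (inv \<rho>) * gdet G y"
proof -
  \<comment> \<open>substituting \<open>X\<^sub>\<sigma> \<mapsto> X\<^sub>\<rho>\<^sub>\<sigma>\<close> composes the summation index \<open>\<pi>\<close> with \<open>M : \<sigma> \<mapsto> \<rho>\<^sup>-\<^sup>1\<sigma>\<close>\<close>
  define M where "M = (\<lambda>\<sigma>. if \<sigma> \<in> G then inv \<rho> \<circ> \<sigma> else \<sigma>)"
  have "\<rho> \<circ> inv \<rho> = id" using bij by (simp add: bij_is_surj flip: surj_iff)
  have bij_inv: "bij_betw ((\<circ>) (inv \<rho>)) G G"
    by (rule bij_betw_comp_left[OF bij_imp_bij_inv[OF bij]]) (simp_all add: inv_inv_eq bij closed closed_inv)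
  have M: "M permutes G"
    by (rule bij_imp_permutes) (use bij_inv in \<open>auto simp: M_def cong: bij_betw_cong\<close>)
  have reindex: "(\<Prod>\<sigma>\<in>G. y (\<rho> \<circ> (\<sigma> \<circ> inv (\<pi> \<sigma>)))) = (\<Prod>\<sigma>\<in>G. y (\<sigma> \<circ> inv ((\<pi> \<circ> M) \<sigma>)))" for \<pi>
    using prod.reindex_bij_betw[OF bij_inv, of "\<lambda>\<sigma>. y (\<rho> \<circ> (\<sigma> \<circ> inv (\<pi> \<sigma>)))", symmetric]
    by (simp add: M_def \<open>\<rho> \<circ> inv \<rho> = id\<close> flip: comp_assoc cong: prod.cong)
  have "gdet G y = (\<Sum>\<pi> | \<pi> permutes G. of_int (sign (\<pi> \<circ> M)) * (\<Prod>\<sigma>\<in>G. y (\<sigma> \<circ> inv ((\<pi> \<circ> M) \<sigma>))))"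
    unfolding gdet_def by (rule sum_permutations_compose_right[OF M])
  also have "\<dots> = translation_sign G (inv \<rho>) * gdet G (\<lambda>\<sigma>. y (\<rho> \<circ> \<sigma>))"
    unfolding gdet_def translation_sign_def M_def[symmetric] sum_distrib_left
  proof (intro sum.cong)
    fix \<pi> assume "\<pi> \<in> {\<pi>. \<pi> permutes G}"
    then have "permutation \<pi>" "permutation M"
      using finite M by (auto simp: permutation_permutes)
    then have "sign (\<pi> \<circ> M) = sign \<pi> * sign M" by (rule sign_compose)
    then show "of_int (sign (\<pi> \<circ> M)) * (\<Prod>\<sigma>\<in>G. y (\<sigma> \<circ> inv ((\<pi> \<circ> M) \<sigma>))) =
        of_int (sign M) * (of_int (sign \<pi>) * (\<Prod>\<sigma>\<in>G. y (\<rho> \<circ> (\<sigma> \<circ> inv (\<pi> \<sigma>)))))"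
      by (simp add: reindex)
  qed simp
  finally have "translation_sign G (inv \<rho>) * gdet G y =
      (translation_sign G (inv \<rho>) * translation_sign G (inv \<rho>)) * gdet G (\<lambda>\<sigma>. y (\<rho> \<circ> \<sigma>))"
    by simp
  then show ?thesis by (simp add: translation_sign_square)
qed

lemma gdet_deriv_left_translate:
  "gdet_deriv G (\<lambda>\<sigma>. y (\<rho> \<circ> \<sigma>)) \<tau> = translation_sign G (inv \<rho>) * gdet_deriv G y (\<rho> \<circ> \<tau>)"
proof -
  have "inv \<rho> \<circ> (\<rho> \<circ> \<sigma>) = \<sigma>" for \<sigma>
    using bij by (simp add: bij_is_inj flip: comp_assoc)
  then have "\<rho> \<circ> \<sigma> = \<rho> \<circ> \<tau> \<longleftrightarrow> \<sigma> = \<tau>" for \<sigma>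
    by metis
  then have shift: "(\<lambda>\<sigma>. y (\<rho> \<circ> \<sigma>))(\<tau> := y (\<rho> \<circ> \<tau>) + t) = (\<lambda>\<sigma>. (y(\<rho> \<circ> \<tau> := y (\<rho> \<circ> \<tau>) + t)) (\<rho> \<circ> \<sigma>))" for t
    by auto
  have "((\<lambda>t. gdet G ((\<lambda>\<sigma>. y (\<rho> \<circ> \<sigma>))(\<tau> := y (\<rho> \<circ> \<tau>) + t))) has_field_derivative
      gdet_deriv G (\<lambda>\<sigma>. y (\<rho> \<circ> \<sigma>)) \<tau>) (at 0)"
    using has_field_derivative_gdet[of G "\<lambda>\<sigma>. y (\<rho> \<circ> \<sigma>)" \<tau>] by simp
  moreover have "((\<lambda>t. gdet G ((\<lambda>\<sigma>. y (\<rho> \<circ> \<sigma>))(\<tau> := y (\<rho> \<circ> \<tau>) + t))) has_field_derivative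
      translation_sign G (inv \<rho>) * gdet_deriv G y (\<rho> \<circ> \<tau>)) (at 0)"
    unfolding shift gdet_left_translate by (intro DERIV_cmult has_field_derivative_gdet)
  ultimately show ?thesis by (rule DERIV_unique)
qed

end

lemma gdet_in_subfield:
  assumes "is_subfield L" and entries: "\<And>\<pi> \<sigma>. \<pi> permutes G \<Longrightarrow> \<sigma> \<in> G \<Longrightarrow> y (\<sigma> \<circ> inv (\<pi> \<sigma>)) \<in> L"
  shows "gdet G y \<in> L"
  unfolding gdet_def using assms by (auto intro!: subfield_sum subfield_mult subfield_prod subfield_of_int)

lemma gdet_deriv_in_subfield:
  assumes "is_subfield L" and entries: "\<And>\<pi> \<sigma>. \<pi> permutes G \<Longrightarrow> \<sigma> \<in> G \<Longrightarrow> y (\<sigma> \<circ> inv (\<pi> \<sigma>)) \<in> L"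
  shows "gdet_deriv G y \<tau> \<in> L"
  unfolding gdet_deriv_def using assms
  by (auto intro!: subfield_sum subfield_mult subfield_prod subfield_of_int subfield_0 subfield_1)

context subfield_hom
begin

lemma hom_gdet:
  assumes entries: "\<And>\<pi> \<sigma>. \<pi> permutes G \<Longrightarrow> \<sigma> \<in> G \<Longrightarrow> y (\<sigma> \<circ> inv (\<pi> \<sigma>)) \<in> L"
  shows "\<rho> (gdet G y) = gdet G (\<lambda>\<sigma>. \<rho> (y \<sigma>))"
proof -
  have prod_in: "(\<Prod>\<sigma>\<in>G. y (\<sigma> \<circ> inv (\<pi> \<sigma>))) \<in> L" if "\<pi> permutes G" for \<pi>
    using that entries by (auto intro!: subfield_prod[OF subfield])
  have "\<rho> (of_int (sign \<pi>) * (\<Prod>\<sigma>\<in>G. y (\<sigma> \<circ> inv (\<pi> \<sigma>)))) =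
      of_int (sign \<pi>) * (\<Prod>\<sigma>\<in>G. \<rho> (y (\<sigma> \<circ> inv (\<pi> \<sigma>))))" if "\<pi> permutes G" for \<pi>
    using that entries prod_in
    by (simp add: hom_mult hom_of_int hom_prod subfield_of_int[OF subfield])
  with prod_in show ?thesis
    unfolding gdet_def by (subst hom_sum) (auto intro!: subfield_mult subfield_of_int subfield)
qed

lemma hom_gdet_deriv:
  assumes entries: "\<And>\<pi> \<sigma>. \<pi> permutes G \<Longrightarrow> \<sigma> \<in> G \<Longrightarrow> y (\<sigma> \<circ> inv (\<pi> \<sigma>)) \<in> L"
  shows "\<rho> (gdet_deriv G y \<tau>) = gdet_deriv G (\<lambda>\<sigma>. \<rho> (y \<sigma>)) \<tau>"
proof -
  have prod_in: "(\<Prod>\<sigma>\<in>G - {s}. y (\<sigma> \<circ> inv (\<pi> \<sigma>))) \<in> L" if "\<pi> permutes G" for \<pi> s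
    using that entries by (auto intro!: subfield_prod[OF subfield])
  have hom_prod': "\<rho> (\<Prod>\<sigma>\<in>G - {s}. y (\<sigma> \<circ> inv (\<pi> \<sigma>))) = (\<Prod>\<sigma>\<in>G - {s}. \<rho> (y (\<sigma> \<circ> inv (\<pi> \<sigma>))))"
    if "\<pi> permutes G" for \<pi> s
    using that entries by (auto intro!: hom_prod)
  have term_in: "(if c then 1 else 0) * (\<Prod>\<sigma>\<in>G - {s}. y (\<sigma> \<circ> inv (\<pi> \<sigma>))) \<in> L"
    if "\<pi> permutes G" for \<pi> s c
    using prod_in[OF that] subfield_0[OF subfield] by simp
  have term_hom: "\<rho> ((if c then 1 else 0) * (\<Prod>\<sigma>\<in>G - {s}. y (\<sigma> \<circ> inv (\<pi> \<sigma>)))) =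
      (if c then 1 else 0) * (\<Prod>\<sigma>\<in>G - {s}. \<rho> (y (\<sigma> \<circ> inv (\<pi> \<sigma>))))"
    if "\<pi> permutes G" for \<pi> s c
    using hom_prod'[OF that] by (simp add: hom_0)
  have inner_in: "(\<Sum>s\<in>G. (if s \<circ> inv (\<pi> s) = \<tau> then 1 else 0) * (\<Prod>\<sigma>\<in>G - {s}. y (\<sigma> \<circ> inv (\<pi> \<sigma>)))) \<in> L"
    if "\<pi> permutes G" for \<pi>
    using term_in[OF that] by (auto intro!: subfield_sum[OF subfield])
  have "\<rho> (of_int (sign \<pi>) *
      (\<Sum>s\<in>G. (if s \<circ> inv (\<pi> s) = \<tau> then 1 else 0) * (\<Prod>\<sigma>\<in>G - {s}. y (\<sigma> \<circ> inv (\<pi> \<sigma>))))) =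
    of_int (sign \<pi>) *
      (\<Sum>s\<in>G. (if s \<circ> inv (\<pi> s) = \<tau> then 1 else 0) * (\<Prod>\<sigma>\<in>G - {s}. \<rho> (y (\<sigma> \<circ> inv (\<pi> \<sigma>)))))"
    if "\<pi> permutes G" for \<pi>
    using that inner_in term_in
    by (simp add: hom_mult hom_of_int hom_sum term_hom subfield_of_int[OF subfield])
  with inner_in show ?thesis
    unfolding gdet_deriv_def by (subst hom_sum) (auto intro!: subfield_mult subfield_of_int subfield)
qed

end

definition a_numer :: "(complex \<Rightarrow> complex) set \<Rightarrow> complex \<Rightarrow> (complex \<Rightarrow> complex) set \<Rightarrow> nat \<Rightarrow> complex" where
  "a_numer G \<xi> K i = (\<Sum>\<sigma>\<in>G. \<Sum>\<tau>\<in>K. \<sigma> (\<xi> ^ i) * gdet_deriv G (\<lambda>\<sigma>. \<sigma> \<xi>) (\<sigma> \<circ> \<tau>))"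

lemma a_coeff_eq: "a_coeff G \<xi> K i = a_numer G \<xi> K i / (of_nat (card G) * gdet G (\<lambda>\<sigma>. \<sigma> \<xi>))"
  unfolding a_coeff_def a_numer_def gpartial_eq_gdet_deriv by (simp add: sum_divide_distrib field_simps)

context
  fixes L :: "complex set" and \<xi> :: complex
  assumes subfield: "is_subfield L" and generator: "\<xi> \<in> L" and finite: "finite (Aut L)"
begin

lemma Aut_orbit_entry_in:
  assumes "\<pi> permutes Aut L" and "\<sigma> \<in> Aut L" shows "(\<sigma> \<circ> inv (\<pi> \<sigma>)) \<xi> \<in> L"
proof -
  have "\<pi> \<sigma> \<in> Aut L" using assms by (simp add: permutes_in_image)
  with assms(2) show ?thesis by (intro Aut_image[OF Aut_comp[OF _ Aut_inv] generator])
qed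

lemma Aut_gdet_orbit:
  assumes "\<rho> \<in> Aut L"
  shows "\<rho> (gdet (Aut L) (\<lambda>\<sigma>. \<sigma> \<xi>)) = translation_sign (Aut L) (inv \<rho>) * gdet (Aut L) (\<lambda>\<sigma>. \<sigma> \<xi>)"
proof -
  interpret subfield_hom L \<rho> using Aut_subfield_hom subfield assms .
  have "\<rho> (gdet (Aut L) (\<lambda>\<sigma>. \<sigma> \<xi>)) = gdet (Aut L) (\<lambda>\<sigma>. (\<rho> \<circ> \<sigma>) \<xi>)"
    unfolding comp_apply by (rule hom_gdet) (rule Aut_orbit_entry_in)
  also have "\<dots> = translation_sign (Aut L) (inv \<rho>) * gdet (Aut L) (\<lambda>\<sigma>. \<sigma> \<xi>)"
    by (rule gdet_left_translate) (use assms in \<open>auto intro: finite Aut_bij Aut_comp Aut_inv\<close>)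
  finally show ?thesis .
qed

lemma Aut_gdet_deriv_orbit:
  assumes "\<rho> \<in> Aut L"
  shows "\<rho> (gdet_deriv (Aut L) (\<lambda>\<sigma>. \<sigma> \<xi>) \<tau>) =
    translation_sign (Aut L) (inv \<rho>) * gdet_deriv (Aut L) (\<lambda>\<sigma>. \<sigma> \<xi>) (\<rho> \<circ> \<tau>)"
proof -
  interpret subfield_hom L \<rho> using Aut_subfield_hom subfield assms .
  have "\<rho> (gdet_deriv (Aut L) (\<lambda>\<sigma>. \<sigma> \<xi>) \<tau>) = gdet_deriv (Aut L) (\<lambda>\<sigma>. (\<rho> \<circ> \<sigma>) \<xi>) \<tau>"
    unfolding comp_apply by (rule hom_gdet_deriv) (rule Aut_orbit_entry_in)
  also have "\<dots> = translation_sign (Aut L) (inv \<rho>) * gdet_deriv (Aut L) (\<lambda>\<sigma>. \<sigma> \<xi>) (\<rho> \<circ> \<tau>)"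
    by (rule gdet_deriv_left_translate) (use assms in \<open>auto intro: finite Aut_bij Aut_comp Aut_inv\<close>)
  finally show ?thesis .
qed

lemma Aut_gdet_in: "gdet (Aut L) (\<lambda>\<sigma>. \<sigma> \<xi>) \<in> L"
  using subfield Aut_orbit_entry_in by (rule gdet_in_subfield)

lemma Aut_gdet_deriv_in: "gdet_deriv (Aut L) (\<lambda>\<sigma>. \<sigma> \<xi>) \<tau> \<in> L"
  using subfield Aut_orbit_entry_in by (rule gdet_deriv_in_subfield)

lemma Aut_a_numer_term_in:
  "\<sigma> \<in> Aut L \<Longrightarrow> \<sigma> (\<xi> ^ i) * gdet_deriv (Aut L) (\<lambda>\<sigma>. \<sigma> \<xi>) (\<sigma> \<circ> \<tau>) \<in> L"
  by (intro subfield_mult[OF subfield] Aut_gdet_deriv_in Aut_image[OF _ subfield_power[OF subfield generator]])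

lemma a_numer_in_subfield: "a_numer (Aut L) \<xi> K i \<in> L"
  unfolding a_numer_def using Aut_a_numer_term_in by (auto intro!: subfield_sum[OF subfield])

lemma Aut_a_numer:
  assumes \<rho>: "\<rho> \<in> Aut L"
  shows "\<rho> (a_numer (Aut L) \<xi> K i) = translation_sign (Aut L) (inv \<rho>) * a_numer (Aut L) \<xi> K i"
proof -
  interpret subfield_hom L \<rho> using Aut_subfield_hom subfield \<rho> .
  define D where "D = gdet_deriv (Aut L) (\<lambda>\<sigma>. \<sigma> \<xi>)"
  define s where "s = translation_sign (Aut L) (inv \<rho>)"
  have "\<rho> (a_numer (Aut L) \<xi> K i) = (\<Sum>\<sigma>\<in>Aut L. \<Sum>\<tau>\<in>K. \<rho> (\<sigma> (\<xi> ^ i) * D (\<sigma> \<circ> \<tau>)))"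
    unfolding a_numer_def D_def using Aut_a_numer_term_in
    by (simp add: hom_sum subfield_sum[OF subfield])
  also have "\<dots> = (\<Sum>\<sigma>\<in>Aut L. \<Sum>\<tau>\<in>K. s * ((\<rho> \<circ> \<sigma>) (\<xi> ^ i) * D ((\<rho> \<circ> \<sigma>) \<circ> \<tau>)))"
    using Aut_image[OF _ subfield_power[OF subfield generator]] Aut_gdet_deriv_in
    by (intro sum.cong refl) (simp add: hom_mult D_def s_def Aut_gdet_deriv_orbit[OF \<rho>] comp_assoc)
  also have "\<dots> = s * a_numer (Aut L) \<xi> K i"
    unfolding a_numer_def D_def[symmetric] sum_distrib_left
    by (subst sum.reindex_bij_betw[OF Aut_comp_left_bij[OF \<rho>], symmetric]) (simp add: algebra_simps)
  finally show ?thesis unfolding s_def .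
qed

lemma Aut_card_in: "of_nat (card (Aut L)) \<in> L"
  by (rule subfield_Rats[OF subfield]) simp

lemma a_coeff_in_subfield: "a_coeff (Aut L) \<xi> K i \<in> L"
  unfolding a_coeff_eq
  by (intro subfield_divide subfield_mult subfield a_numer_in_subfield Aut_card_in Aut_gdet_in)

lemma Aut_fixes_a_coeff:
  assumes \<rho>: "\<rho> \<in> Aut L"
  shows "\<rho> (a_coeff (Aut L) \<xi> K i) = a_coeff (Aut L) \<xi> K i"
proof -
  interpret subfield_hom L \<rho> using Aut_subfield_hom subfield \<rho> .
  have "translation_sign (Aut L) (inv \<rho>) \<noteq> 0"
    using translation_sign_square[of "Aut L" "inv \<rho>"] by auto
  then show ?thesis
    unfolding a_coeff_eq using Aut_gdet_orbit[OF \<rho>] Aut_a_numer[OF \<rho>]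
    by (simp add: hom_divide hom_mult hom_Rats subfield_mult subfield
        a_numer_in_subfield Aut_card_in Aut_gdet_in)
qed

end

lemma a_coeff_Rats:
  assumes "is_subfield L" and "\<xi> \<in> L" and "normal_basis L (Aut L) \<xi>"
  shows "a_coeff (Aut L) \<xi> K i \<in> \<rat>"
proof -
  have "finite (Aut L)" using assms(3) by (rule normal_basis_finite)
  with assms show ?thesis
    by (simp add: normal_basis_fixed_imp_Rats a_coeff_in_subfield Aut_fixes_a_coeff)
qed

theorem corollary4p5:
  fixes F :: "int poly" and d :: nat and \<xi> :: complex
  assumes "lead_coeff F = 1" and "irreducible F" and "degree F = d"
    and "poly (map_poly of_int F) \<xi> = 0"
    and "galois_over_Q (gen_field \<xi>)"
    and "normal_basis (gen_field \<xi>) (Aut (gen_field \<xi>)) \<xi>"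
  shows "\<forall>\<tau>\<in>Aut (gen_field \<xi>). \<forall>i::nat.
           a_coeff (Aut (gen_field \<xi>)) \<xi> (conj_class (Aut (gen_field \<xi>)) \<tau>) i \<in> \<rat>"
  \<comment> \<open>only the normal basis is needed; \<open>K\<close> may be any set of automorphisms\<close>
  using a_coeff_Rats[OF is_subfield_gen_field gen_field_generator assms(6)] by blast

end
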